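(* Let $\tilde Q=\|q_{ik}\|$ define a $\tilde Q$-expansion of $[0,1]$ with $\inf_{i,k}q_{ik}=q_{\min}>0$, and let $\varPhi$ be the family of its cylindric intervals (interiors of cylinders of all ranks). Then $\varPhi$ is faithful for packing dimension calculation: $\dim_P(E,\varPhi)=\dim_{P(\mathit{unc})}(E)$ for every $E\subset[0,1]$.
   Context: $\tilde Q$-expansion: integers $N_k\ge2$, $q_{ik}>0$ for $k\in\mathbb N$, $i\in\{0,\dots,N_k-1\}$, $\sum_iq_{ik}=1$, $\prod_k\max_iq_{ik}=0$; with $\beta_{ik}=\sum_{l<i}q_{lk}$ each $x\in[0,1]$ is written $x=\sum_k\beta_{a_kk}\prod_{j<k}q_{a_jj}$. The rank-$n$ cylinder $\varDelta_{c_1\dots c_n}$ is the set of $x$ with $a_j(x)=c_j$ for $j\le n$; it is a closed interval of length $\prod_{j\le n}q_{c_jj}$. In $\mathbb R$ with $|A|$ = length: an uncentered $\varepsilon$-packing of $E$ is a countable family of pairwise disjoint open intervals of length $\le\varepsilon$ each meeting $E$; $\mathcal P^\alpha_{\varepsilon(\mathit{unc})}(E)=\sup\sum|E_i|^\alpha$ over these, $\mathcal P^\alpha_{0(\mathit{unc})}=\lim_{\varepsilon\to0}$, $\mathcal P^\alpha_{(\mathit{unc})}(E)=\inf\{\sum_j\mathcal P^\alpha_{0(\mathit{unc})}(E_j):E\subset\bigcup E_j\}$, $\dim_{P(\mathit{unc})}(E)=\inf\{\alpha:\mathcal P^\alpha_{(\mathit{unc})}(E)=0\}$; $\dim_P(E,\varPhi)$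 is defined the same way using only packings by intervals from $\varPhi$. *)

theory Defs
  imports "HOL-Analysis.Analysis"
begin

text \<open>Digits and positions are indexed from 0 (k = 0 is the first digit).
  q i k is the entry q_{ik}; N k is the number of digits at position k.\<close>

definition is_Qtilde :: "(nat \<Rightarrow> nat) \<Rightarrow> (nat \<Rightarrow> nat \<Rightarrow> real) \<Rightarrow> bool" where
  "is_Qtilde N q \<longleftrightarrow>
     (\<forall>k. N k \<ge> 2) \<and>
     (\<forall>k. \<forall>i<N k. q i k > 0) \<and>
     (\<forall>k. (\<Sum>i<N k. q i k) = 1) \<and>
     ((\<lambda>n. \<Prod>k<n. Max ((\<lambda>i. q i k) ` {..<N k})) \<longlonglongrightarrow> 0)"

definition qbeta :: "(nat \<Rightarrow> nat \<Rightarrow> real) \<Rightarrow> nat \<Rightarrow> nat \<Rightarrow> real" where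
  "qbeta q i k = (\<Sum>l<i. q l k)"

definition cyl_left :: "(nat \<Rightarrow> nat \<Rightarrow> real) \<Rightarrow> nat \<Rightarrow> (nat \<Rightarrow> nat) \<Rightarrow> real" where
  "cyl_left q n c = (\<Sum>k<n. qbeta q (c k) k * (\<Prod>j<k. q (c j) j))"

definition cyl_len :: "(nat \<Rightarrow> nat \<Rightarrow> real) \<Rightarrow> nat \<Rightarrow> (nat \<Rightarrow> nat) \<Rightarrow> real" where
  "cyl_len q n c = (\<Prod>j<n. q (c j) j)"

definition cylinder :: "(nat \<Rightarrow> nat \<Rightarrow> real) \<Rightarrow> nat \<Rightarrow> (nat \<Rightarrow> nat) \<Rightarrow> real set" where
  "cylinder q n c = {cyl_left q n c .. cyl_left q n c + cyl_len q n c}"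

definition cylindric_intervals :: "(nat \<Rightarrow> nat) \<Rightarrow> (nat \<Rightarrow> nat \<Rightarrow> real) \<Rightarrow> real set set" where
  "cylindric_intervals N q =
     {interior (cylinder q n c) | n c. n \<ge> 1 \<and> (\<forall>j<n. c j < N j)}"

definition ilen :: "real set \<Rightarrow> real" where
  "ilen I = Sup I - Inf I"

definition open_interval :: "real set \<Rightarrow> bool" where
  "open_interval I \<longleftrightarrow> (\<exists>a b. a < b \<and> I = {a<..<b})"

text \<open>Packings of E by admissible intervals (admissible family Phi) of length \<le> eps.
  For the uncentered packing, Phi = UNIV.\<close>
definition is_packing :: "real set set \<Rightarrow> real \<Rightarrow> real set \<Rightarrow> real set set \<Rightarrow> bool" where
  "is_packing Phi eps E F \<longleftrightarrow>
     countable F \<and> disjoint F \<and>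
     (\<forall>I\<in>F. open_interval I \<and> I \<in> Phi \<and> ilen I \<le> eps \<and> I \<inter> E \<noteq> {})"

definition packing_eps :: "real set set \<Rightarrow> real \<Rightarrow> real \<Rightarrow> real set \<Rightarrow> ennreal" where
  "packing_eps Phi alpha eps E =
     (SUP F \<in> {F. is_packing Phi eps E F}. (\<Sum>\<^sub>\<infinity>I\<in>F. ennreal (ilen I powr alpha)))"

text \<open>P_0 = lim_{eps -> 0}; the premeasure is monotone in eps, so the limit is the infimum.\<close>
definition packing_zero :: "real set set \<Rightarrow> real \<Rightarrow> real set \<Rightarrow> ennreal" where
  "packing_zero Phi alpha E = (INF eps \<in> {0<..}. packing_eps Phi alpha eps E)"

definition packing_measure :: "real set set \<Rightarrow> real \<Rightarrow> real set \<Rightarrow> ennreal" where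
  "packing_measure Phi alpha E =
     (INF C \<in> {C :: nat \<Rightarrow> real set. E \<subseteq> (\<Union>j. C j)}. (\<Sum>j. packing_zero Phi alpha (C j)))"

definition packing_dim :: "real set set \<Rightarrow> real set \<Rightarrow> real" where
  "packing_dim Phi E = Inf {alpha. alpha \<ge> 0 \<and> packing_measure Phi alpha E = 0}"

abbreviation packing_dim_unc :: "real set \<Rightarrow> real" where
  "packing_dim_unc E \<equiv> packing_dim UNIV E"

end

theory Submission
  imports Defs
begin

text \<open>Packings by cylindric intervals are special uncentered packings, so only the inequality
  dim_P(E, Phi) \<ge> dim_P(unc)(E) needs proof, i.e. that P^alpha(E, Phi) = 0 forces
  P^beta(unc)(E) = 0 for beta > alpha. Sort the intervals of an uncentered packing into dyadic
  classes of lengths in (d/2, d]. Each interval of a class contains a point x of E; the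
  stopping cylinder of x, the maximal cylinder around x of length at most d, has length at
  least q_min d because a child cylinder has at least q_min times the length of its parent.
  Distinct stopping cylinders are disjoint and each meets at most six intervals of the class, so
  when the cylindric alpha-sums are at most 1 the class has at most 6 (q_min d)^-alpha members,
  and summing d^beta over the classes gives a geometric series. The argument needs x to lie in the interior of all its cylinders, which
  fails only on the countable set of cylinder endpoints.\<close>

section \<open>Intervals and packing premeasures\<close>

lemma ilen_greaterThanLessThan: "a < b \<Longrightarrow> ilen {a<..<b} = b - a"
  unfolding ilen_def by simp

lemma open_interval_ilen_pos: "open_interval I \<Longrightarrow> 0 < ilen I"
  unfolding open_interval_def using ilen_greaterThanLessThan by auto

lemma open_interval_greaterThanLessThan: "a < b \<Longrightarrow> open_interval {a<..<b}"
  unfolding open_interval_def by blast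

lemma sum_ilen_le_length:
  assumes "finite F" "disjoint F" "\<And>I. I \<in> F \<Longrightarrow> open_interval I \<and> I \<subseteq> {u..v}" "u \<le> v"
  shows "(\<Sum>I\<in>F. ilen I) \<le> v - u"
proof -
  have I: "I \<in> sets lborel \<and> emeasure lborel I \<noteq> \<infinity> \<and> measure lborel I = ilen I"
    if IF: "I \<in> F" for I
  proof -
    obtain a b where "a < b" "I = {a<..<b}" using assms(3)[OF IF] open_interval_def by blast
    then show ?thesis using ilen_greaterThanLessThan by simp
  qed
  have "measure lborel (\<Union>I\<in>F. id I) = (\<Sum>I\<in>F. measure lborel (id I))"
    using I assms(2)
    by (intro measure_finite_Union[OF assms(1)]) (auto simp: disjoint_family_on_def disjoint_def)
  then have "(\<Sum>I\<in>F. ilen I) = measure lborel (\<Union>F)" using I by simp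
  also have "\<dots> \<le> measure lborel {u..v}"
    using assms I by (intro measure_mono_fmeasurable) (auto simp: fmeasurable_def)
  finally show ?thesis using assms(4) by simp
qed

lemma card_disjoint_intervals_meeting_le_6:
  assumes F: "finite F" "disjoint F"
    and I: "\<And>I. I \<in> F \<Longrightarrow> open_interval I \<and> d / 2 < ilen I \<and> ilen I \<le> d \<and> I \<inter> J \<noteq> {}"
    and J: "open_interval J" "ilen J \<le> d"
  shows "card F \<le> 6"
proof -
  obtain a b where ab: "a < b" "J = {a<..<b}" using J(1) unfolding open_interval_def by blast
  have ba: "b - a \<le> d" using J(2) ab ilen_greaterThanLessThan by simp
  have sub: "I \<subseteq> {a - d .. b + d}" if IF: "I \<in> F" for I
  proof -
    obtain u v where uv: "u < v" "I = {u<..<v}" using I[OF IF] open_interval_def by blast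
    have "v - u \<le> d" using I[OF IF] uv ilen_greaterThanLessThan by simp
    moreover obtain x where "x \<in> I" "x \<in> J" using I[OF IF] by blast
    ultimately have "a - d \<le> u" "v \<le> b + d" using uv ab by auto
    then show ?thesis using uv by auto
  qed
  have "(\<Sum>I\<in>F. d / 2) \<le> (\<Sum>I\<in>F. ilen I)" using I by (intro sum_mono) (auto intro: less_imp_le)
  also have "\<dots> \<le> (b + d) - (a - d)" using F sub I ab ba by (intro sum_ilen_le_length) auto
  also have "\<dots> \<le> 6 * (d / 2)" using ba by simp
  finally have "real (card F) * (d / 2) \<le> 6 * (d / 2)" by simp
  moreover have "0 < d / 2" using ab ba by simp
  ultimately have "real (card F) \<le> 6" by (rule mult_right_le_imp_le)
  then show ?thesis by simp
qed

lemma is_packing_subset: "is_packing Phi eps E F \<Longrightarrow> F' \<subseteq> F \<Longrightarrow> is_packing Phi eps E F'"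
  unfolding is_packing_def disjoint_def by (meson countable_subset subsetD)

lemma is_packing_mono: "is_packing Phi eps A F \<Longrightarrow> A \<subseteq> B \<Longrightarrow> is_packing Phi eps B F"
  unfolding is_packing_def by blast

lemma is_packing_mono_eps: "is_packing Phi eps E F \<Longrightarrow> eps \<le> eps' \<Longrightarrow> is_packing Phi eps' E F"
  unfolding is_packing_def by force

lemma finite_sum_le_packing_eps:
  assumes "finite F" "is_packing Phi eps E F"
  shows "ennreal (\<Sum>I\<in>F. ilen I powr alpha) \<le> packing_eps Phi alpha eps E"
proof -
  have "ennreal (\<Sum>I\<in>F. ilen I powr alpha) = (\<Sum>I\<in>F. ennreal (ilen I powr alpha))"
    by (rule sum_ennreal[symmetric]) simp
  also have "\<dots> = (\<Sum>\<^sub>\<infinity>I\<in>F. ennreal (ilen I powr alpha))"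
    using assms(1) by simp
  also have "\<dots> \<le> packing_eps Phi alpha eps E"
    unfolding packing_eps_def using assms(2) by (intro SUP_upper) auto
  finally show ?thesis .
qed

lemma packing_eps_le_finite_bound:
  assumes "\<And>F. finite F \<Longrightarrow> is_packing Phi eps E F \<Longrightarrow> (\<Sum>I\<in>F. ilen I powr alpha) \<le> M"
  shows "packing_eps Phi alpha eps E \<le> ennreal M"
  unfolding packing_eps_def
proof (rule SUP_least, clarsimp)
  fix F assume F: "is_packing Phi eps E F"
  show "(\<Sum>\<^sub>\<infinity>I\<in>F. ennreal (ilen I powr alpha)) \<le> ennreal M"
  proof (rule infsum_le_finite_sums)
    show "(\<lambda>I. ennreal (ilen I powr alpha)) summable_on F" by (rule nonneg_summable_on_complete) simp
    fix F' assume "finite F'" "F' \<subseteq> F"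
    then have "(\<Sum>I\<in>F'. ilen I powr alpha) \<le> M" using assms is_packing_subset F by blast
    then show "(\<Sum>I\<in>F'. ennreal (ilen I powr alpha)) \<le> ennreal M"
      by (simp add: sum_ennreal ennreal_leI)
  qed
qed

lemma packing_zero_eq_0I:
  assumes "\<And>eta. 0 < eta \<Longrightarrow> \<exists>eps>0. packing_eps Phi alpha eps E \<le> ennreal eta"
  shows "packing_zero Phi alpha E = 0"
proof -
  have "packing_zero Phi alpha E \<le> 0 + ennreal eta" if eta: "0 < eta" for eta
  proof -
    obtain eps where "0 < eps" "packing_eps Phi alpha eps E \<le> ennreal eta" using assms[OF eta] by blast
    then show ?thesis unfolding packing_zero_def by (simp add: INF_lower2)
  qed
  then have "packing_zero Phi alpha E \<le> 0" by (rule ennreal_le_epsilon)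
  then show ?thesis by simp
qed

lemma packing_eps_mono: "A \<subseteq> B \<Longrightarrow> packing_eps Phi alpha eps A \<le> packing_eps Phi alpha eps B"
  unfolding packing_eps_def by (rule SUP_subset_mono) (use is_packing_mono in blast, simp)

lemma packing_zero_mono: "A \<subseteq> B \<Longrightarrow> packing_zero Phi alpha A \<le> packing_zero Phi alpha B"
  unfolding packing_zero_def by (intro INF_mono) (use packing_eps_mono in blast)

lemma packing_eps_le_unc: "packing_eps Phi alpha eps A \<le> packing_eps UNIV alpha eps A"
  unfolding packing_eps_def by (rule SUP_subset_mono) (auto simp: is_packing_def)

lemma packing_zero_le_unc: "packing_zero Phi alpha A \<le> packing_zero UNIV alpha A"
  unfolding packing_zero_def by (intro INF_mono) (use packing_eps_le_unc in blast)

lemma packing_measure_le_unc: "packing_measure Phi alpha A \<le> packing_measure UNIV alpha A"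
  unfolding packing_measure_def
  by (intro INF_mono) (use packing_zero_le_unc suminf_le in \<open>blast intro: suminf_le\<close>)

lemma packing_dim_eq_uncI:
  assumes "\<And>alpha beta. 0 \<le> alpha \<Longrightarrow> alpha < beta \<Longrightarrow> packing_measure Phi alpha E = 0
      \<Longrightarrow> packing_measure UNIV beta E = 0"
  shows "packing_dim Phi E = packing_dim UNIV E"
proof -
  define SP where "SP = {alpha. alpha \<ge> 0 \<and> packing_measure Phi alpha E = 0}"
  define SU where "SU = {alpha. alpha \<ge> 0 \<and> packing_measure UNIV alpha E = 0}"
  have sub: "SU \<subseteq> SP"
  proof
    fix alpha assume "alpha \<in> SU"
    moreover have "packing_measure Phi alpha E \<le> packing_measure UNIV alpha E"
      by (rule packing_measure_le_unc)
    ultimately show "alpha \<in> SP" unfolding SP_def SU_def by simp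
  qed
  have up: "alpha + e \<in> SU" if "alpha \<in> SP" "0 < e" for alpha e
    using assms that unfolding SP_def SU_def by auto
  have bdd: "bdd_below SP" "bdd_below SU" unfolding SP_def SU_def by (auto intro: bdd_belowI[of _ 0])
  have "Inf SP = Inf SU"
  proof (cases "SP = {}")
    case True
    then show ?thesis using sub by auto
  next
    case False
    then obtain alpha where "alpha \<in> SP" by blast
    then have "SU \<noteq> {}" using up[of alpha 1] by auto
    show ?thesis
    proof (rule antisym)
      show "Inf SP \<le> Inf SU" by (rule cInf_superset_mono[OF \<open>SU \<noteq> {}\<close> bdd(1) sub])
      show "Inf SU \<le> Inf SP"
      proof (rule field_le_epsilon)
        fix e :: real assume "0 < e"
        then obtain alpha where "alpha \<in> SP" "alpha < Inf SP + e / 2"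
          using cInf_lessD[OF False, of "Inf SP + e / 2"] by auto
        moreover have "Inf SU \<le> alpha + e / 2"
          using up[OF \<open>alpha \<in> SP\<close>] \<open>0 < e\<close> by (intro cInf_lower bdd(2)) auto
        ultimately show "Inf SU \<le> Inf SP + e" by simp
      qed
    qed
  qed
  then show ?thesis unfolding packing_dim_def SP_def SU_def .
qed

lemma packing_zero_empty: "packing_zero Phi alpha {} = 0"
  by (rule packing_zero_eq_0I) (auto intro!: exI[of _ 1] packing_eps_le_finite_bound simp: is_packing_def)

lemma packing_zero_subset_singleton:
  assumes "0 < alpha" "A \<subseteq> {x}"
  shows "packing_zero Phi alpha A = 0"
proof (rule packing_zero_eq_0I)
  fix eta :: real assume eta: "0 < eta"
  define eps where "eps = eta powr (1 / alpha)"
  have "packing_eps Phi alpha eps A \<le> ennreal eta"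
  proof (rule packing_eps_le_finite_bound)
    fix F assume F: "finite F" "is_packing Phi eps A F"
    have "F \<subseteq> {I}" if "I \<in> F" for I
      using F(2) assms(2) that unfolding is_packing_def disjoint_def by blast
    then consider "F = {}" | I where "F = {I}" by blast
    then show "(\<Sum>I\<in>F. ilen I powr alpha) \<le> eta"
    proof cases
      case (2 I)
      then have "ilen I powr alpha \<le> eps powr alpha"
        using F(2) assms(1) open_interval_ilen_pos[of I] unfolding is_packing_def by (intro powr_mono2) auto
      also have "eps powr alpha = eta" using eta assms(1) unfolding eps_def powr_powr by simp
      finally show ?thesis using 2 by simp
    qed (use eta in simp)
  qed
  moreover have "0 < eps" using eta unfolding eps_def by simp
  ultimately show "\<exists>eps>0. packing_eps Phi alpha eps A \<le> ennreal eta" by blast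
qed

lemma packing_measure_eq_0_countable_cover:
  assumes "countable \<C>" "E \<subseteq> \<Union>\<C>" "\<And>C. C \<in> \<C> \<Longrightarrow> packing_zero Phi alpha C = 0"
  shows "packing_measure Phi alpha E = 0"
proof -
  obtain C :: "nat \<Rightarrow> real set" where C: "E \<subseteq> (\<Union>j. C j)" "\<And>j. packing_zero Phi alpha (C j) = 0"
  proof (cases "\<C> = {}")
    case True
    then show ?thesis using that[of "\<lambda>_. {}"] assms(2) packing_zero_empty by auto
  next
    case False
    have "E \<subseteq> (\<Union>j. from_nat_into \<C> j)"
      using assms(2) range_from_nat_into[OF False assms(1)] by simp
    moreover have "packing_zero Phi alpha (from_nat_into \<C> j) = 0" for j
      using assms(3) from_nat_into[OF False] by blast
    ultimately show ?thesis by (rule that)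
  qed
  have "packing_measure Phi alpha E \<le> (\<Sum>j. packing_zero Phi alpha (C j))"
    unfolding packing_measure_def using C(1) by (intro INF_lower) simp
  then show ?thesis using C(2) by simp
qed

lemma sum_power_le_geometric_tail:
  fixes r :: real
  assumes "0 \<le> r" "r < 1" "finite T" "\<And>k. k \<in> T \<Longrightarrow> k0 \<le> k"
  shows "(\<Sum>k\<in>T. r ^ k) \<le> r ^ k0 / (1 - r)"
proof -
  have inj: "inj_on (\<lambda>k. k - k0) T" using assms(4) by (intro inj_onI) (metis le_add_diff_inverse)
  have "(\<Sum>k\<in>T. r ^ k) = (\<Sum>k\<in>T. r ^ k0 * r ^ (k - k0))"
    using assms(4) by (intro sum.cong refl) (metis le_add_diff_inverse power_add)
  also have "\<dots> = r ^ k0 * (\<Sum>i\<in>(\<lambda>k. k - k0) ` T. r ^ i)"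
    by (simp add: sum_distrib_left sum.reindex[OF inj])
  also have "\<dots> \<le> r ^ k0 * (\<Sum>i. r ^ i)"
    using assms by (intro mult_left_mono sum_le_suminf) (auto intro: summable_geometric)
  finally show ?thesis using suminf_geometric[of r] assms by simp
qed

lemma power_powr:
  fixes x :: real
  assumes "0 < x"
  shows "(x ^ n) powr a = (x powr a) ^ n"
proof -
  have "(x ^ n) powr a = (x powr real n) powr a" using assms by (simp add: powr_realpow)
  also have "\<dots> = (x powr a) ^ n" using assms by (simp add: powr_powr powr_power)
  finally show ?thesis .
qed

definition dyadic_rank :: "real \<Rightarrow> nat" where
  "dyadic_rank l = (LEAST k. (1/2) ^ Suc k < l)"

lemma dyadic_rank:
  assumes "0 < l" "l \<le> 1"
  shows "(1/2) ^ Suc (dyadic_rank l) < l" "l \<le> (1/2) ^ dyadic_rank l"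
proof -
  obtain m where "(1/2::real) ^ m < l"
    using assms(1) order_tendstoD(2)[OF LIMSEQ_realpow_zero[of "1/2::real"]]
    by (auto simp: eventually_sequentially)
  moreover have "(1/2::real) ^ Suc m \<le> (1/2) ^ m" by (rule power_decreasing) auto
  ultimately have "(1/2::real) ^ Suc m < l" by linarith
  then show "(1/2) ^ Suc (dyadic_rank l) < l" unfolding dyadic_rank_def by (rule LeastI)
  show "l \<le> (1/2) ^ dyadic_rank l"
  proof (cases "dyadic_rank l")
    case (Suc m)
    then show ?thesis using not_less_Least[of m "\<lambda>k. (1/2::real) ^ Suc k < l"]
      unfolding dyadic_rank_def by simp
  qed (use assms in simp)
qed

lemma dyadic_rank_ge:
  assumes "0 < l" "l \<le> (1/2) ^ m"
  shows "m \<le> dyadic_rank l"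
proof (rule ccontr)
  assume "\<not> m \<le> dyadic_rank l"
  then have "(1/2::real) ^ m \<le> (1/2) ^ Suc (dyadic_rank l)" by (intro power_decreasing) auto
  moreover have "l \<le> 1" using assms(2) power_le_one[of "1/2::real" m] by simp
  ultimately show False using dyadic_rank(1)[OF assms(1)] assms(2) by simp
qed

section \<open>Cylinders of a Q-tilde expansion\<close>

lemma qbeta_0 [simp]: "qbeta q 0 k = 0"
  unfolding qbeta_def by simp

lemma qbeta_Suc: "qbeta q (Suc i) k = qbeta q i k + q i k"
  unfolding qbeta_def by simp

lemma cyl_left_Suc: "cyl_left q (Suc n) c = cyl_left q n c + qbeta q (c n) n * cyl_len q n c"
  by (simp add: cyl_left_def cyl_len_def)

lemma cyl_len_Suc: "cyl_len q (Suc n) c = cyl_len q n c * q (c n) n"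
  by (simp add: cyl_len_def)

lemma interior_cylinder: "interior (cylinder q n c) = {cyl_left q n c <..< cyl_left q n c + cyl_len q n c}"
  unfolding cylinder_def by simp

lemma cylinder_prefix_cong:
  assumes "\<forall>j<n. c j = c' j"
  shows "cyl_left q n c = cyl_left q n c'" "cyl_len q n c = cyl_len q n c'"
    "cylinder q n c = cylinder q n c'"
proof -
  show len: "cyl_len q n c = cyl_len q n c'"
    unfolding cyl_len_def using assms by (intro prod.cong) auto
  show left: "cyl_left q n c = cyl_left q n c'"
    unfolding cyl_left_def using assms by (intro sum.cong refl arg_cong2[where f="(*)"] prod.cong) auto
  show "cylinder q n c = cylinder q n c'"
    unfolding cylinder_def len left ..
qed

locale qtilde_expansion =
  fixes N :: "nat \<Rightarrow> nat" and q :: "nat \<Rightarrow> nat \<Rightarrow> real"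
  assumes is_Qtilde: "is_Qtilde N q"
begin

definition admissible :: "nat \<Rightarrow> (nat \<Rightarrow> nat) \<Rightarrow> bool" where
  "admissible n c \<longleftrightarrow> (\<forall>j<n. c j < N j)"

lemma admissible_le: "admissible n c \<Longrightarrow> m \<le> n \<Longrightarrow> admissible m c"
  unfolding admissible_def by auto

lemma q_pos: "i < N k \<Longrightarrow> 0 < q i k"
  using is_Qtilde unfolding is_Qtilde_def by auto

lemma q_nonneg: "i < N k \<Longrightarrow> 0 \<le> q i k"
  using q_pos[of i k] by simp

lemma qbeta_N: "qbeta q (N k) k = 1"
  using is_Qtilde unfolding is_Qtilde_def qbeta_def by auto

lemma qbeta_mono:
  assumes "i \<le> i'" "i' \<le> N k"
  shows "qbeta q i k \<le> qbeta q i' k"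
proof -
  have "qbeta q i' k = qbeta q i k + (\<Sum>l\<in>{i..<i'}. q l k)"
    unfolding qbeta_def using assms by (metis atLeast0LessThan sum.atLeastLessThan_concat zero_le)
  moreover have "0 \<le> (\<Sum>l\<in>{i..<i'}. q l k)"
    using assms by (intro sum_nonneg) (auto intro: q_nonneg)
  ultimately show ?thesis by simp
qed

lemma qbeta_nonneg: "i \<le> N k \<Longrightarrow> 0 \<le> qbeta q i k"
  using qbeta_mono[of 0 i k] by simp

lemma qbeta_Suc_le_1: "i < N k \<Longrightarrow> qbeta q i k + q i k \<le> 1"
  using qbeta_mono[of "Suc i" "N k" k] qbeta_N by (simp add: qbeta_Suc)

lemma cyl_len_pos: "admissible n c \<Longrightarrow> 0 < cyl_len q n c"
  unfolding cyl_len_def admissible_def by (intro prod_pos) (auto intro: q_pos)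

lemma cylinder_Suc_subset:
  assumes "admissible (Suc n) c"
  shows "cylinder q (Suc n) c \<subseteq> cylinder q n c"
proof -
  have c: "c n < N n" using assms admissible_def by auto
  have l: "0 \<le> cyl_len q n c" using cyl_len_pos[of n c] assms admissible_le by force
  have "0 \<le> qbeta q (c n) n * cyl_len q n c" using qbeta_nonneg c l by simp
  moreover have "qbeta q (c n) n * cyl_len q n c + cyl_len q n c * q (c n) n \<le> cyl_len q n c"
    using mult_right_mono[OF qbeta_Suc_le_1[OF c] l] by (simp add: algebra_simps)
  ultimately show ?thesis unfolding cylinder_def cyl_left_Suc cyl_len_Suc atLeastatMost_subset_iff
    by (intro disjI2 conjI) linarith+
qed

lemma cylinder_antimono:
  assumes "admissible n c" "m \<le> n"
  shows "cylinder q n c \<subseteq> cylinder q m c"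
  using assms
proof (induction n)
  case (Suc n)
  show ?case
  proof (cases "m = Suc n")
    case False
    then show ?thesis
      using Suc cylinder_Suc_subset[of n c] admissible_le[of "Suc n" c n] by force
  qed simp
qed simp

text \<open>At the first digit where c and c' differ, the two cylinders are non-overlapping
  subintervals of a common parent.\<close>

lemma eq_digits_if_interiors_meet:
  assumes "admissible n c" "admissible n c'"
    and "interior (cylinder q n c) \<inter> interior (cylinder q n c') \<noteq> {}"
  shows "\<forall>j<n. c j = c' j"
proof (rule ccontr)
  assume "\<not> (\<forall>j<n. c j = c' j)"
  then obtain j where j: "j < n" "c j \<noteq> c' j" "\<forall>i<j. c i = c' i"
    using exists_least_iff[of "\<lambda>j. j < n \<and> c j \<noteq> c' j"] by (metis dual_order.strict_trans)
  have sub: "interior (cylinder q n c) \<subseteq> interior (cylinder q (Suc j) c)"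
    "interior (cylinder q n c') \<subseteq> interior (cylinder q (Suc j) c')"
    using interior_mono[OF cylinder_antimono[of n c "Suc j"]]
      interior_mono[OF cylinder_antimono[of n c' "Suc j"]] assms j by auto
  define L where "L = cyl_left q j c"
  define l where "l = cyl_len q j c"
  have parent: "cyl_left q j c' = L" "cyl_len q j c' = l"
    using cylinder_prefix_cong[of j c c' q] j unfolding L_def l_def by auto
  have l: "0 \<le> l" using cyl_len_pos[of j c] assms(1) j admissible_le[of n c j] by (simp add: l_def)
  have apart: "{L + qbeta q a j * l <..< L + qbeta q a j * l + l * q a j}
      \<inter> {L + qbeta q b j * l <..< L + qbeta q b j * l + l * q b j} = {}"
    if "a < b" "b < N j" for a b
  proof -
    have "qbeta q (Suc a) j \<le> qbeta q b j" using that by (intro qbeta_mono) auto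
    then have "qbeta q a j * l + l * q a j \<le> qbeta q b j * l"
      using mult_right_mono[OF _ l, of "qbeta q a j + q a j" "qbeta q b j"]
      by (simp add: qbeta_Suc algebra_simps)
    then show ?thesis by auto
  qed
  have digits: "c j < N j" "c' j < N j" using assms j by (auto simp: admissible_def)
  have I: "interior (cylinder q (Suc j) e)
      = {L + qbeta q (e j) j * l <..< L + qbeta q (e j) j * l + l * q (e j) j}"
    if "e = c \<or> e = c'" for e
    using that parent unfolding interior_cylinder cyl_left_Suc cyl_len_Suc L_def l_def
    by (auto simp: mult.commute)
  have "interior (cylinder q (Suc j) c) \<inter> interior (cylinder q (Suc j) c') = {}"
  proof (cases "c j < c' j")
    case True
    then show ?thesis
      unfolding I[OF disjI1[OF refl]] I[OF disjI2[OF refl]] by (rule apart[OF _ digits(2)])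
  next
    case False
    then have "c' j < c j" using j(2) by simp
    then show ?thesis
      unfolding I[OF disjI1[OF refl]] I[OF disjI2[OF refl]]
      by (subst Int_commute) (rule apart[OF _ digits(1)])
  qed
  then show False using assms(3) sub by blast
qed

lemma ex_digit:
  assumes "0 \<le> t" "t \<le> 1"
  shows "\<exists>i<N k. qbeta q i k \<le> t \<and> t \<le> qbeta q i k + q i k"
proof -
  define A where "A = {i. i < N k \<and> qbeta q i k \<le> t}"
  have "0 < N k" using is_Qtilde unfolding is_Qtilde_def by (metis less_le_trans pos2)
  then have "finite A" "0 \<in> A" unfolding A_def using assms by auto
  then have i: "Max A \<in> A" "\<And>i. i \<in> A \<Longrightarrow> i \<le> Max A" using Max_in Max_ge by blast+
  have "t \<le> qbeta q (Suc (Max A)) k"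
  proof (cases "Suc (Max A) < N k")
    case True
    moreover have "Suc (Max A) \<notin> A" using i(2)[of "Suc (Max A)"] by auto
    ultimately show ?thesis unfolding A_def by auto
  next
    case False
    then have "Suc (Max A) = N k" using i(1) A_def by auto
    then show ?thesis using qbeta_N assms by simp
  qed
  then show ?thesis using i(1) unfolding A_def qbeta_Suc by auto
qed

lemma ex_cylinder_mem: "x \<in> {0..1} \<Longrightarrow> \<exists>c. admissible n c \<and> x \<in> cylinder q n c"
proof (induction n)
  case 0
  then show ?case by (auto simp: admissible_def cylinder_def cyl_left_def cyl_len_def)
next
  case (Suc n)
  then obtain c where c: "admissible n c" "x \<in> cylinder q n c" by blast
  define L where "L = cyl_left q n c"
  define l where "l = cyl_len q n c"
  have l: "0 < l" using cyl_len_pos c l_def by auto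
  have x: "L \<le> x" "x \<le> L + l" using c unfolding cylinder_def L_def l_def by auto
  define t where "t = (x - L) / l"
  have "0 \<le> t" "t \<le> 1" using x l unfolding t_def by (auto simp: field_simps)
  then obtain i where i: "i < N n" "qbeta q i n \<le> t" "t \<le> qbeta q i n + q i n"
    using ex_digit by blast
  define c' where "c' = c(n := i)"
  have prefix: "\<forall>j<n. c' j = c j" and c'n: "c' n = i" unfolding c'_def by auto
  have "admissible (Suc n) c'"
    using c(1) i unfolding admissible_def c'_def by (auto simp: less_Suc_eq)
  moreover have "x \<in> cylinder q (Suc n) c'"
  proof -
    have "x = L + t * l" using l unfolding t_def by (simp add: field_simps)
    moreover have "qbeta q i n * l \<le> t * l" "t * l \<le> (qbeta q i n + q i n) * l"
      using i l by (auto intro: mult_right_mono)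
    ultimately show ?thesis
      unfolding cylinder_def cyl_left_Suc cyl_len_Suc c'n cylinder_prefix_cong[OF prefix]
        L_def[symmetric] l_def[symmetric]
      by (auto simp: algebra_simps)
  qed
  ultimately show ?case by blast
qed

definition inner_points :: "real set" where
  "inner_points = {x. \<forall>n. \<exists>c. admissible n c \<and> x \<in> interior (cylinder q n c)}"

text \<open>A point of [0,1] that is not inner is an endpoint of some cylinder, and there are only
  countably many of those; lists serve to enumerate the finite digit prefixes.\<close>

lemma countable_not_inner_points: "countable ({0..1} - inner_points)"
proof -
  define left where "left n l = cyl_left q n (\<lambda>j. l ! j)" for n l
  define right where "right n l = cyl_left q n (\<lambda>j. l ! j) + cyl_len q n (\<lambda>j. l ! j)" for n l
  have "{0..1} - inner_points \<subseteq> (\<Union>n. range (left n) \<union> range (right n))"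
  proof
    fix x assume x: "x \<in> {0..1} - inner_points"
    then obtain n where n: "\<forall>c. admissible n c \<longrightarrow> x \<notin> interior (cylinder q n c)"
      unfolding inner_points_def by auto
    obtain c where c: "admissible n c" "x \<in> cylinder q n c" using ex_cylinder_mem x by blast
    have "\<forall>j<n. map c [0..<n] ! j = c j" by simp
    note prefix = cylinder_prefix_cong[OF this]
    have "x \<notin> interior (cylinder q n c)" using n c(1) by blast
    then have "x = cyl_left q n c \<or> x = cyl_left q n c + cyl_len q n c"
      using c(2) unfolding cylinder_def interior_cylinder by auto
    then have "x = left n (map c [0..<n]) \<or> x = right n (map c [0..<n])"
      unfolding left_def right_def prefix(1,2) .
    then show "x \<in> (\<Union>n. range (left n) \<union> range (right n))" by blast
  qed
  then show ?thesis by (rule countable_subset) simp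
qed

definition inner_digits :: "real \<Rightarrow> nat \<Rightarrow> nat \<Rightarrow> nat" where
  "inner_digits x n = (SOME c. admissible n c \<and> x \<in> interior (cylinder q n c))"

lemma inner_digits:
  assumes "x \<in> inner_points"
  shows "admissible n (inner_digits x n)" "x \<in> interior (cylinder q n (inner_digits x n))"
proof -
  have "\<exists>c. admissible n c \<and> x \<in> interior (cylinder q n c)"
    using assms inner_points_def by auto
  from someI_ex[OF this] show "admissible n (inner_digits x n)"
    "x \<in> interior (cylinder q n (inner_digits x n))"
    unfolding inner_digits_def by auto
qed

lemma inner_digits_prefix:
  assumes "x \<in> inner_points" "m \<le> n"
  shows "\<forall>j<m. inner_digits x n j = inner_digits x m j"
proof (rule eq_digits_if_interiors_meet)
  show "admissible m (inner_digits x n)" "admissible m (inner_digits x m)"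
    using inner_digits(1)[OF assms(1)] admissible_le assms(2) by blast+
  have "x \<in> interior (cylinder q m (inner_digits x n))"
    using inner_digits[OF assms(1), of n] assms
    by (meson cylinder_antimono interior_mono subsetD)
  then show "interior (cylinder q m (inner_digits x n))
      \<inter> interior (cylinder q m (inner_digits x m)) \<noteq> {}"
    using inner_digits(2)[OF assms(1)] by blast
qed

lemma cyl_len_le_prod_Max:
  assumes "admissible n c"
  shows "cyl_len q n c \<le> (\<Prod>k<n. Max ((\<lambda>i. q i k) ` {..<N k}))"
  unfolding cyl_len_def
proof (rule prod_mono)
  fix k assume "k \<in> {..<n}"
  then have "c k < N k" using assms admissible_def by auto
  then show "0 \<le> q (c k) k \<and> q (c k) k \<le> Max ((\<lambda>i. q i k) ` {..<N k})"
    using q_nonneg by (auto intro: Max_ge)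
qed

lemma ex_cyl_len_le:
  assumes "x \<in> inner_points" "0 < d"
  shows "\<exists>n. cyl_len q n (inner_digits x n) \<le> d"
proof -
  have "(\<lambda>n. \<Prod>k<n. Max ((\<lambda>i. q i k) ` {..<N k})) \<longlonglongrightarrow> 0"
    using is_Qtilde is_Qtilde_def by auto
  then have "\<forall>\<^sub>F n in sequentially. (\<Prod>k<n. Max ((\<lambda>i. q i k) ` {..<N k})) < d"
    using assms(2) by (auto dest: order_tendstoD)
  then obtain n where "(\<Prod>k<n. Max ((\<lambda>i. q i k) ` {..<N k})) < d"
    by (auto simp: eventually_sequentially)
  then show ?thesis
    using cyl_len_le_prod_Max[OF inner_digits(1)[OF assms(1)], of n]
    by (meson less_imp_le order_trans)
qed

section \<open>Stopping cylinders\<close>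

definition stop_rank :: "real \<Rightarrow> real \<Rightarrow> nat" where
  "stop_rank x d = (LEAST n. cyl_len q n (inner_digits x n) \<le> d)"

definition stop_cylinder :: "real \<Rightarrow> real \<Rightarrow> real set" where
  "stop_cylinder x d = interior (cylinder q (stop_rank x d) (inner_digits x (stop_rank x d)))"

lemma cyl_len_stop_rank_le:
  assumes "x \<in> inner_points" "0 < d"
  shows "cyl_len q (stop_rank x d) (inner_digits x (stop_rank x d)) \<le> d"
  using LeastI_ex[OF ex_cyl_len_le[OF assms]] unfolding stop_rank_def .

lemma stop_rank_le: "cyl_len q n (inner_digits x n) \<le> d \<Longrightarrow> stop_rank x d \<le> n"
  unfolding stop_rank_def by (rule Least_le)

lemma stop_rank_pos:
  assumes "x \<in> inner_points" "0 < d" "d < 1"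
  shows "0 < stop_rank x d"
  using cyl_len_stop_rank_le[OF assms(1,2)] assms(3)
  by (cases "stop_rank x d") (auto simp: cyl_len_def)

lemma ilen_stop_cylinder:
  assumes "x \<in> inner_points"
  shows "ilen (stop_cylinder x d) = cyl_len q (stop_rank x d) (inner_digits x (stop_rank x d))"
  unfolding stop_cylinder_def interior_cylinder
  using ilen_greaterThanLessThan cyl_len_pos[OF inner_digits(1)[OF assms]] by simp

lemma stop_cylinder:
  assumes "x \<in> inner_points" "0 < d" "d < 1"
  shows "stop_cylinder x d \<in> cylindric_intervals N q" "open_interval (stop_cylinder x d)"
    "x \<in> stop_cylinder x d" "ilen (stop_cylinder x d) \<le> d"
proof -
  note digits = inner_digits[OF assms(1), of "stop_rank x d"]
  have "1 \<le> stop_rank x d" "\<forall>j<stop_rank x d. inner_digits x (stop_rank x d) j < N j"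
    using stop_rank_pos[OF assms] digits(1) unfolding admissible_def by auto
  then show "stop_cylinder x d \<in> cylindric_intervals N q"
    unfolding cylindric_intervals_def stop_cylinder_def by blast
  show "open_interval (stop_cylinder x d)"
    unfolding stop_cylinder_def interior_cylinder
    using cyl_len_pos[OF digits(1)] by (intro open_interval_greaterThanLessThan) simp
  show "x \<in> stop_cylinder x d" using digits(2) unfolding stop_cylinder_def .
  show "ilen (stop_cylinder x d) \<le> d"
    using ilen_stop_cylinder[OF assms(1)] cyl_len_stop_rank_le[OF assms(1,2)] by simp
qed

text \<open>Stopping cylinders at a common scale form a net: if two of them meet, the one of
  smaller rank already satisfies the stopping condition at the larger rank, so the ranks agree.\<close>

lemma stop_cylinders_eq_if_meet:
  assumes "x \<in> inner_points" "y \<in> inner_points" "0 < d"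
    and "stop_cylinder x d \<inter> stop_cylinder y d \<noteq> {}"
  shows "stop_cylinder x d = stop_cylinder y d"
proof -
  have *: "stop_cylinder x d = stop_cylinder y d"
    if x: "x \<in> inner_points" and y: "y \<in> inner_points"
      and meet: "stop_cylinder x d \<inter> stop_cylinder y d \<noteq> {}"
      and le: "stop_rank x d \<le> stop_rank y d"
    for x y
  proof -
    define m where "m = stop_rank x d"
    define n where "n = stop_rank y d"
    have mn: "m \<le> n" using le unfolding m_def n_def .
    have Sx: "stop_cylinder x d = interior (cylinder q m (inner_digits x m))"
      unfolding stop_cylinder_def m_def ..
    have Sy: "stop_cylinder y d = interior (cylinder q n (inner_digits y n))"
      unfolding stop_cylinder_def n_def ..
    have "stop_cylinder y d \<subseteq> interior (cylinder q m (inner_digits y n))"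
      unfolding Sy using inner_digits(1)[OF y] mn by (intro interior_mono cylinder_antimono)
    then have "interior (cylinder q m (inner_digits x m))
        \<inter> interior (cylinder q m (inner_digits y n)) \<noteq> {}"
      using meet unfolding Sx by blast
    then have xy: "\<forall>j<m. inner_digits x m j = inner_digits y n j"
      using eq_digits_if_interiors_meet inner_digits(1)[OF x]
        admissible_le[OF inner_digits(1)[OF y] mn] by blast
    have "\<forall>j<m. inner_digits y n j = inner_digits y m j"
      using inner_digits_prefix[OF y mn] .
    then have "cyl_len q m (inner_digits y m) = cyl_len q m (inner_digits x m)"
      using cylinder_prefix_cong(2)[of m "inner_digits x m" "inner_digits y m"] xy by auto
    also have "\<dots> \<le> d" using cyl_len_stop_rank_le[OF x assms(3)] m_def by simp
    finally have "n \<le> m" unfolding n_def by (rule stop_rank_le)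
    then have "m = n" using le m_def n_def by simp
    then show ?thesis unfolding Sx Sy using cylinder_prefix_cong(3)[OF xy] by simp
  qed
  show ?thesis
  proof (cases "stop_rank x d \<le> stop_rank y d")
    case True
    then show ?thesis by (rule *[OF assms(1,2,4)])
  next
    case False
    then have "stop_rank y d \<le> stop_rank x d" by simp
    moreover have "stop_cylinder y d \<inter> stop_cylinder x d \<noteq> {}" using assms(4) by blast
    ultimately show ?thesis using *[OF assms(2,1)] by simp
  qed
qed

lemma stop_cylinders_is_packing:
  assumes "countable X" "X \<subseteq> F \<inter> inner_points" "0 < d" "d < 1"
  shows "is_packing (cylindric_intervals N q) d F ((\<lambda>x. stop_cylinder x d) ` X)"
  unfolding is_packing_def
proof (intro conjI ballI)
  show "countable ((\<lambda>x. stop_cylinder x d) ` X)" using assms(1) by simp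
  show "disjoint ((\<lambda>x. stop_cylinder x d) ` X)"
    unfolding disjoint_def
  proof (intro ballI impI)
    fix A B
    assume "A \<in> (\<lambda>x. stop_cylinder x d) ` X" "B \<in> (\<lambda>x. stop_cylinder x d) ` X" "A \<noteq> B"
    then obtain x y where "x \<in> X" "y \<in> X" "A = stop_cylinder x d" "B = stop_cylinder y d" by blast
    then show "A \<inter> B = {}"
      using stop_cylinders_eq_if_meet[of x y d] assms(2,3) \<open>A \<noteq> B\<close> by blast
  qed
  fix J assume "J \<in> (\<lambda>x. stop_cylinder x d) ` X"
  then obtain x where x: "x \<in> X" "J = stop_cylinder x d" by blast
  then have "x \<in> inner_points" using assms(2) by blast
  note J = stop_cylinder[OF this assms(3,4)]
  show "open_interval J" "J \<in> cylindric_intervals N q" "ilen J \<le> d" using J x by simp_all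
  show "J \<inter> F \<noteq> {}" using J(3) x assms(2) by blast
qed

end

locale qtilde_expansion_bounded = qtilde_expansion +
  assumes inf_q_pos: "(INF p \<in> {(i, k). i < N k}. q (fst p) (snd p)) > 0"
begin

definition q_min :: real where
  "q_min = (INF p \<in> {(i, k). i < N k}. q (fst p) (snd p))"

lemma q_min_pos: "0 < q_min"
  using inf_q_pos unfolding q_min_def .

lemma q_min_le:
  assumes "i < N k"
  shows "q_min \<le> q i k"
proof -
  have "bdd_below ((\<lambda>p. q (fst p) (snd p)) ` {(i, k). i < N k})"
    by (rule bdd_belowI[where m=0]) (auto intro: q_nonneg)
  moreover have "(i, k) \<in> {(i, k). i < N k}" using assms by simp
  ultimately have "(INF p \<in> {(i, k). i < N k}. q (fst p) (snd p))
      \<le> q (fst (i, k)) (snd (i, k))"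
    by (rule cINF_lower)
  then show ?thesis unfolding q_min_def by simp
qed

text \<open>Minimality of the stopping rank: the parent cylinder is longer than d, and passing to a
  child shrinks the length by a factor of at least q_min.\<close>

lemma ilen_stop_cylinder_ge:
  assumes x: "x \<in> inner_points" and d: "0 < d" "d < 1"
  shows "q_min * d \<le> ilen (stop_cylinder x d)"
proof -
  define n where "n = stop_rank x d"
  obtain m where m: "n = Suc m" using stop_rank_pos[OF x d] n_def gr0_implies_Suc by blast
  have "\<not> stop_rank x d \<le> m" using m n_def by simp
  then have "d < cyl_len q m (inner_digits x m)" using stop_rank_le[of m x d] by (meson not_le)
  have prefix: "\<forall>j<m. inner_digits x n j = inner_digits x m j"
    using inner_digits_prefix[OF x, of m n] m by simp
  have digit: "inner_digits x n m < N m" using inner_digits(1)[OF x, of n] m admissible_def by simp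
  have "q_min * d \<le> q (inner_digits x n m) m * cyl_len q m (inner_digits x m)"
    using q_min_le[OF digit] q_min_pos d \<open>d < cyl_len q m (inner_digits x m)\<close>
    by (intro mult_mono) auto
  also have "\<dots> = cyl_len q n (inner_digits x n)"
    using cylinder_prefix_cong(2)[OF prefix] m by (simp add: cyl_len_Suc)
  finally show ?thesis using ilen_stop_cylinder[OF x] n_def by simp
qed

section \<open>Comparison with uncentered packings\<close>

lemma card_stop_cylinders_le:
  assumes F: "F \<subseteq> inner_points" and e: "packing_eps (cylindric_intervals N q) alpha e F \<le> 1"
    and alpha: "0 \<le> alpha" and d: "0 < d" "d < 1" "d \<le> e"
    and X: "finite X" "X \<subseteq> F"
  shows "real (card ((\<lambda>x. stop_cylinder x d) ` X)) * (q_min * d) powr alpha \<le> 1"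
proof -
  define P where "P = (\<lambda>x. stop_cylinder x d) ` X"
  have P: "finite P" unfolding P_def using X(1) by simp
  have "is_packing (cylindric_intervals N q) d F P"
    unfolding P_def using X F d(1,2) by (intro stop_cylinders_is_packing countable_finite) auto
  then have "is_packing (cylindric_intervals N q) e F P" using d(3) by (rule is_packing_mono_eps)
  then have "ennreal (\<Sum>J\<in>P. ilen J powr alpha) \<le> 1"
    using order_trans[OF finite_sum_le_packing_eps[OF P] e] by blast
  moreover have "(\<Sum>J\<in>P. (q_min * d) powr alpha) \<le> (\<Sum>J\<in>P. ilen J powr alpha)"
  proof (rule sum_mono)
    fix J assume "J \<in> P"
    then obtain x where "x \<in> X" "J = stop_cylinder x d" unfolding P_def by blast
    then show "(q_min * d) powr alpha \<le> ilen J powr alpha"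
      using ilen_stop_cylinder_ge[of x d] X(2) F d alpha q_min_pos by (intro powr_mono2) auto
  qed
  ultimately show ?thesis unfolding P_def by simp
qed

text \<open>Each stopping cylinder, being of length at most d, meets at most six of the
  intervals; assign to each interval the stopping cylinder of a point it shares with F.\<close>

lemma card_dyadic_class_le:
  assumes F: "F \<subseteq> inner_points" and e: "packing_eps (cylindric_intervals N q) alpha e F \<le> 1"
    and alpha: "0 \<le> alpha" and d: "0 < d" "d < 1" "d \<le> e"
    and \<I>: "finite \<I>" "disjoint \<I>"
      "\<And>I. I \<in> \<I> \<Longrightarrow> open_interval I \<and> I \<inter> F \<noteq> {} \<and> d / 2 < ilen I \<and> ilen I \<le> d"
  shows "real (card \<I>) * (q_min * d) powr alpha \<le> 6"
proof -
  obtain pt where pt: "\<And>I. I \<in> \<I> \<Longrightarrow> pt I \<in> I \<inter> F"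
    using bchoice[of \<I> "\<lambda>I x. x \<in> I \<inter> F"] \<I>(3) by blast
  have pts: "pt ` \<I> \<subseteq> F \<inter> inner_points" using pt F by blast
  define P where "P = (\<lambda>x. stop_cylinder x d) ` pt ` \<I>"
  have P: "finite P" unfolding P_def using \<I>(1) by simp
  have card_P: "real (card P) * (q_min * d) powr alpha \<le> 1"
    unfolding P_def using pts \<I>(1) by (intro card_stop_cylinders_le[OF F e alpha d]) auto
  have fibre: "card {I \<in> \<I>. stop_cylinder (pt I) d = J} \<le> 6" if JP: "J \<in> P" for J
  proof -
    obtain I0 where I0: "I0 \<in> \<I>" "J = stop_cylinder (pt I0) d" using JP P_def by blast
    then have "pt I0 \<in> inner_points" using pts by blast
    then have J: "open_interval J" "ilen J \<le> d" using stop_cylinder(2,4)[of "pt I0" d] I0 d by auto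
    have "I \<inter> J \<noteq> {}" if "I \<in> \<I>" "stop_cylinder (pt I) d = J" for I
      using pt[OF that(1)] stop_cylinder(3)[of "pt I" d] pts d that by blast
    then show ?thesis
      using \<I> J by (intro card_disjoint_intervals_meeting_le_6) (auto simp: disjoint_def)
  qed
  have "card (\<Union>J\<in>P. {I \<in> \<I>. stop_cylinder (pt I) d = J})
      \<le> (\<Sum>J\<in>P. card {I \<in> \<I>. stop_cylinder (pt I) d = J})"
    by (rule card_UN_le[OF P])
  moreover have "(\<Union>J\<in>P. {I \<in> \<I>. stop_cylinder (pt I) d = J}) = \<I>" unfolding P_def by blast
  ultimately have "card \<I> \<le> (\<Sum>J\<in>P. card {I \<in> \<I>. stop_cylinder (pt I) d = J})" by simp
  also have "\<dots> \<le> (\<Sum>J\<in>P. 6)" using fibre by (rule sum_mono)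
  finally have "real (card \<I>) \<le> 6 * real (card P)" by simp
  then have "real (card \<I>) * (q_min * d) powr alpha \<le> 6 * real (card P) * (q_min * d) powr alpha"
    by (rule mult_right_mono) simp
  also have "\<dots> \<le> 6" using card_P by simp
  finally show ?thesis .
qed

lemma sum_dyadic_class_le:
  assumes F: "F \<subseteq> inner_points" and e: "packing_eps (cylindric_intervals N q) alpha e F \<le> 1"
    and alpha: "0 \<le> alpha" "alpha \<le> beta" and d: "0 < d" "d < 1" "d \<le> e"
    and \<I>: "finite \<I>" "disjoint \<I>"
      "\<And>I. I \<in> \<I> \<Longrightarrow> open_interval I \<and> I \<inter> F \<noteq> {} \<and> d / 2 < ilen I \<and> ilen I \<le> d"
  shows "(\<Sum>I\<in>\<I>. ilen I powr beta) \<le> 6 / q_min powr alpha * d powr (beta - alpha)"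
proof -
  have "(\<Sum>I\<in>\<I>. ilen I powr beta) \<le> (\<Sum>I\<in>\<I>. d powr beta)"
    using \<I>(3) alpha by (intro sum_mono powr_mono2) (auto intro: less_imp_le open_interval_ilen_pos)
  also have "\<dots> = (real (card \<I>) * (q_min * d) powr alpha) * (d powr (beta - alpha) / q_min powr alpha)"
    using q_min_pos d(1) by (simp add: powr_mult powr_diff)
  also have "\<dots> \<le> 6 * (d powr (beta - alpha) / q_min powr alpha)"
    using card_dyadic_class_le[OF F e alpha(1) d \<I>]
    by (rule mult_right_mono) simp_all
  finally show ?thesis by simp
qed

lemma sum_dyadic_rank_class_le:
  assumes F: "F \<subseteq> inner_points" and e: "packing_eps (cylindric_intervals N q) alpha e F \<le> 1"
    and alpha: "0 \<le> alpha" "alpha \<le> beta" and k: "1 \<le> k" "(1/2) ^ k \<le> e"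
    and \<I>: "finite \<I>" "disjoint \<I>"
      "\<And>I. I \<in> \<I> \<Longrightarrow> open_interval I \<and> I \<inter> F \<noteq> {} \<and> ilen I \<le> 1 \<and> dyadic_rank (ilen I) = k"
  shows "(\<Sum>I\<in>\<I>. ilen I powr beta) \<le> 6 / q_min powr alpha * ((1/2) powr (beta - alpha)) ^ k"
proof -
  define d where "d = (1/2::real) ^ k"
  have "d \<le> 1/2" unfolding d_def using k(1) power_decreasing[of 1 k "1/2::real"] by simp
  then have d: "0 < d" "d < 1" "d \<le> e" using k(2) unfolding d_def by simp_all
  have "d / 2 < ilen I \<and> ilen I \<le> d" if "I \<in> \<I>" for I
  proof -
    have "0 < ilen I" "ilen I \<le> 1" "dyadic_rank (ilen I) = k"
      using \<I>(3)[OF that] open_interval_ilen_pos[of I] by auto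
    then show ?thesis using dyadic_rank[of "ilen I"] unfolding d_def by simp
  qed
  then have "(\<Sum>I\<in>\<I>. ilen I powr beta) \<le> 6 / q_min powr alpha * d powr (beta - alpha)"
    using \<I> by (intro sum_dyadic_class_le[OF F e alpha d]) auto
  also have "d powr (beta - alpha) = ((1/2) powr (beta - alpha)) ^ k"
    unfolding d_def by (rule power_powr) simp
  finally show ?thesis .
qed

text \<open>An uncentered packing of mesh 2^-k0 is sorted into dyadic classes of interval lengths
  in (2^-(k+1), 2^-k] with k \<ge> k0; the class k contributes at most a constant times r^k, where
  r = 2^-(beta-alpha) < 1.\<close>

lemma sum_unc_packing_le:
  assumes F: "F \<subseteq> inner_points" and e: "packing_eps (cylindric_intervals N q) alpha e F \<le> 1"
    and alpha: "0 \<le> alpha" "alpha < beta" and k0: "1 \<le> k0" "(1/2) ^ k0 \<le> e"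
    and \<I>: "finite \<I>" "is_packing UNIV ((1/2) ^ k0) F \<I>"
  shows "(\<Sum>I\<in>\<I>. ilen I powr beta)
    \<le> 6 / q_min powr alpha * ((1/2) powr (beta - alpha)) ^ k0 / (1 - (1/2) powr (beta - alpha))"
proof -
  define r where "r = (1/2::real) powr (beta - alpha)"
  have r: "0 < r" "r < 1"
    unfolding r_def using powr_less_mono2[of "beta - alpha" "1/2" 1] alpha by simp_all
  define C where "C = 6 / q_min powr alpha"
  have C: "0 < C" unfolding C_def using q_min_pos by simp
  define rk where "rk I = dyadic_rank (ilen I)" for I
  have I: "open_interval I \<and> I \<inter> F \<noteq> {} \<and> ilen I \<le> 1 \<and> k0 \<le> rk I" if "I \<in> \<I>" for I
  proof -
    have "open_interval I" "I \<inter> F \<noteq> {}" "ilen I \<le> (1/2) ^ k0"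
      using \<I>(2) that unfolding is_packing_def by auto
    moreover have "(1/2::real) ^ k0 \<le> 1" by (simp add: power_le_one)
    ultimately show ?thesis
      using dyadic_rank_ge[of "ilen I" k0] open_interval_ilen_pos[of I] unfolding rk_def by simp
  qed
  have class_sum: "(\<Sum>I\<in>{I \<in> \<I>. rk I = k}. ilen I powr beta) \<le> C * r ^ k"
    if "k \<in> rk ` \<I>" for k
  proof -
    have "k0 \<le> k" using that I by auto
    then have "(1/2::real) ^ k \<le> (1/2) ^ k0" by (rule power_decreasing) simp_all
    then have "(1/2::real) ^ k \<le> e" using k0(2) by linarith
    moreover have "disjoint {I \<in> \<I>. rk I = k}"
      using \<I>(2) unfolding is_packing_def disjoint_def by blast
    moreover have "open_interval I \<and> I \<inter> F \<noteq> {} \<and> ilen I \<le> 1 \<and> dyadic_rank (ilen I) = k"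
      if "I \<in> {I \<in> \<I>. rk I = k}" for I
      using I[of I] that unfolding rk_def by simp
    ultimately show ?thesis
      unfolding C_def r_def using k0(1) \<open>k0 \<le> k\<close> alpha \<I>(1)
      by (intro sum_dyadic_rank_class_le[OF F e]) simp_all
  qed
  have "(\<Sum>I\<in>\<I>. ilen I powr beta)
      = (\<Sum>k\<in>rk ` \<I>. \<Sum>I\<in>{I \<in> \<I>. rk I = k}. ilen I powr beta)"
    using sum.group[OF \<I>(1) finite_imageI[OF \<I>(1)], where g=rk and h="\<lambda>I. ilen I powr beta"]
    by simp
  also have "\<dots> \<le> (\<Sum>k\<in>rk ` \<I>. C * r ^ k)" using class_sum by (rule sum_mono)
  also have "\<dots> \<le> C * (r ^ k0 / (1 - r))"
    unfolding sum_distrib_left[symmetric] using r C I \<I>(1)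
    by (intro mult_left_mono sum_power_le_geometric_tail) auto
  finally show ?thesis unfolding C_def r_def by simp
qed

lemma packing_zero_unc_eq_0:
  assumes F: "F \<subseteq> inner_points" and small: "packing_zero (cylindric_intervals N q) alpha F < 1"
    and alpha: "0 \<le> alpha" "alpha < beta"
  shows "packing_zero UNIV beta F = 0"
proof (rule packing_zero_eq_0I)
  fix eta :: real assume eta: "0 < eta"
  obtain e where e: "0 < e" "packing_eps (cylindric_intervals N q) alpha e F \<le> 1"
    using small unfolding packing_zero_def by (auto simp: INF_less_iff less_imp_le)
  define r where "r = (1/2::real) powr (beta - alpha)"
  have r: "0 < r" "r < 1"
    unfolding r_def using powr_less_mono2[of "beta - alpha" "1/2" 1] alpha by simp_all
  define C where "C = 6 / q_min powr alpha"
  have C: "0 < C" unfolding C_def using q_min_pos by simp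
  have "\<forall>\<^sub>F k in sequentially. (1/2::real) ^ k < e"
    using e(1) by (intro order_tendstoD(2)[OF LIMSEQ_realpow_zero]) simp_all
  moreover have "\<forall>\<^sub>F k in sequentially. r ^ k < eta * (1 - r) / C"
    using r eta C by (intro order_tendstoD(2)[OF LIMSEQ_realpow_zero]) simp_all
  ultimately have
    "\<forall>\<^sub>F k in sequentially. (1/2::real) ^ k < e \<and> r ^ k < eta * (1 - r) / C \<and> 1 \<le> k"
    by (intro eventually_conj eventually_ge_at_top)
  then obtain k0 where k0: "(1/2::real) ^ k0 < e" "r ^ k0 < eta * (1 - r) / C" "1 \<le> k0"
    unfolding eventually_sequentially by blast
  have "packing_eps UNIV beta ((1/2) ^ k0) F \<le> ennreal eta"
  proof (rule packing_eps_le_finite_bound)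
    fix \<I> assume \<I>: "finite \<I>" "is_packing UNIV ((1/2) ^ k0) F \<I>"
    have "(\<Sum>I\<in>\<I>. ilen I powr beta) \<le> C * r ^ k0 / (1 - r)"
      unfolding C_def r_def using k0(1,3)
      by (intro sum_unc_packing_le[OF F e(2) alpha _ _ \<I>]) simp_all
    also have "\<dots> \<le> eta" using k0(2) r C by (simp add: field_simps)
    finally show "(\<Sum>I\<in>\<I>. ilen I powr beta) \<le> eta" .
  qed
  then show "\<exists>eps>0. packing_eps UNIV beta eps F \<le> ennreal eta" by (intro exI[of _ "(1/2) ^ k0"]) simp
qed

text \<open>Points that are not inner form a countable set, which is null for every positive
  exponent; on the inner points the previous lemma applies.\<close>

lemma packing_measure_unc_eq_0:
  assumes E: "E \<subseteq> {0..1}" and alpha: "0 \<le> alpha" "alpha < beta"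
    and null: "packing_measure (cylindric_intervals N q) alpha E = 0"
  shows "packing_measure UNIV beta E = 0"
proof -
  have "packing_measure (cylindric_intervals N q) alpha E < 1" using null by simp
  then obtain C where C: "E \<subseteq> (\<Union>j. C j)"
      "(\<Sum>j. packing_zero (cylindric_intervals N q) alpha (C j)) < 1"
    unfolding packing_measure_def by (auto simp: INF_less_iff)
  have inner: "packing_zero UNIV beta (C j \<inter> inner_points) = 0" for j
  proof (rule packing_zero_unc_eq_0[OF _ _ alpha])
    have "packing_zero (cylindric_intervals N q) alpha (C j \<inter> inner_points)
        \<le> (\<Sum>i\<in>{j}. packing_zero (cylindric_intervals N q) alpha (C i))"
      by (simp add: packing_zero_mono)
    also have "\<dots> \<le> (\<Sum>j. packing_zero (cylindric_intervals N q) alpha (C j))"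
      by (rule sum_le_suminf) (auto intro: summableI)
    finally show "packing_zero (cylindric_intervals N q) alpha (C j \<inter> inner_points) < 1"
      using C(2) by simp
  qed simp
  define \<C> where "\<C> = range (\<lambda>j. C j \<inter> inner_points) \<union> (\<lambda>x. {x}) ` (E - inner_points)"
  have "countable (E - inner_points)"
    by (rule countable_subset[OF _ countable_not_inner_points]) (use E in blast)
  then have "countable \<C>" unfolding \<C>_def by simp
  moreover have "E \<subseteq> \<Union>\<C>"
  proof
    fix x assume x: "x \<in> E"
    then obtain j where "x \<in> C j" using C(1) by blast
    then show "x \<in> \<Union>\<C>" using x unfolding \<C>_def by (cases "x \<in> inner_points") blast+
  qed
  moreover have "packing_zero UNIV beta A = 0" if "A \<in> \<C>" for A
  proof -
    from that consider j where "A = C j \<inter> inner_points" | x where "A = {x}"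
      unfolding \<C>_def by blast
    then show ?thesis
    proof cases
      case (2 x)
      then show ?thesis using alpha by (intro packing_zero_subset_singleton[of beta A x]) auto
    qed (use inner in simp)
  qed
  ultimately show ?thesis by (rule packing_measure_eq_0_countable_cover)
qed

end

theorem theorem6:
  fixes N :: "nat \<Rightarrow> nat" and q :: "nat \<Rightarrow> nat \<Rightarrow> real" and E :: "real set"
  assumes "is_Qtilde N q"
    and "(INF p \<in> {(i, k). i < N k}. q (fst p) (snd p)) > 0"
    and "E \<subseteq> {0..1}"
  shows "packing_dim (cylindric_intervals N q) E = packing_dim_unc E"
proof -
  interpret qtilde_expansion_bounded N q
    using assms(1,2) by unfold_locales
  show ?thesis
    using packing_measure_unc_eq_0[OF assms(3)] by (rule packing_dim_eq_uncI)
qed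

end
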